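(* Assume $0\in\bar\Lambda$. For all $1\le\lambda<\infty$, $0<t\le T$ and $y\in\Lambda$, $$\int_{\mathbb{R}}|\phi_t(y,\eta)-G^\lambda_t(y,\eta)|\,d\eta\le2P_y(\tau_\lambda\le t),\qquad\int_{\mathbb{R}}(\phi_t(y,\eta)-G^\lambda_t(y,\eta))^2\,d\eta\le Ct^{-1/2}P_y(\tau_\lambda\le t),$$ with a constant $0<C<\infty$ depending only on $T$.
   Context: $\bar\Lambda\subset\mathbb{R}$ is an open interval of length 1, $\Lambda=\lambda\bar\Lambda$, $T>0$. $G^\lambda_t(y,\eta)$ is the Neumann heat kernel on $\Lambda$ (heat equation $\partial_tu=\partial_y^2u$), extended by zero to $\mathbb{R}\times\mathbb{R}$. $\phi_t(y,\eta)=(4\pi t)^{-1/2}\exp(-(y-\eta)^2/(4t))$ is the heat kernel on $\mathbb{R}$. For a standard Brownian motion $(B_t)$, $\tau_\lambda=\inf\{t\ge0:B_{2t}\notin\lambda\bar\Lambda\}$, and $P_y$ denotes probability when $B_0=y$. *)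

theory Defs
  imports "HOL-Probability.Probability"
begin

text \<open>The reference interval scaled by lam: if the unit interval is the open interval
  with left endpoint alpha, then the scaled interval is (lam*alpha, lam*alpha + lam).\<close>
definition scaled_interval :: "real \<Rightarrow> real \<Rightarrow> real set" where
  "scaled_interval alpha lam = {lam * alpha <..< lam * alpha + lam}"

text \<open>Heat kernel on the real line for u_t = u_yy.\<close>
definition heat_kernel_R :: "real \<Rightarrow> real \<Rightarrow> real \<Rightarrow> real" where
  "heat_kernel_R t y \<eta> = exp (- ((y - \<eta>)^2) / (4 * t)) / sqrt (4 * pi * t)"

text \<open>Neumann heat kernel (eigenfunction expansion) for u_t = u_yy on the open interval
  (a, a+L), extended by zero outside (a,a+L) x (a,a+L).\<close>
definition neumann_kernel :: "real \<Rightarrow> real \<Rightarrow> real \<Rightarrow> real \<Rightarrow> real \<Rightarrow> real" where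
  "neumann_kernel a L t y \<eta> =
     (if y \<in> {a<..<a+L} \<and> \<eta> \<in> {a<..<a+L} then
        1 / L + (2 / L) * (\<Sum>n. exp (- ((real (Suc n))^2 * pi^2 * t / L^2))
                 * cos (real (Suc n) * pi * (y - a) / L) * cos (real (Suc n) * pi * (\<eta> - a) / L))
      else 0)"

definition std_brownian_motion :: "'a measure \<Rightarrow> (real \<Rightarrow> 'a \<Rightarrow> real) \<Rightarrow> bool" where
  "std_brownian_motion M B \<longleftrightarrow>
     prob_space M \<and>
     (\<forall>t. B t \<in> borel_measurable M) \<and>
     (\<forall>\<omega>\<in>space M. B 0 \<omega> = 0 \<and> continuous_on {0..} (\<lambda>t. B t \<omega>)) \<and>
     (\<forall>s t. 0 \<le> s \<and> s < t \<longrightarrow>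
        distributed M lborel (\<lambda>\<omega>. B t \<omega> - B s \<omega>) (normal_density 0 (sqrt (t - s)))) \<and>
     (\<forall>ts :: nat \<Rightarrow> real. \<forall>n. 0 \<le> ts 0 \<and> (\<forall>i<n. ts i < ts (Suc i)) \<longrightarrow>
        prob_space.indep_vars M (\<lambda>_. borel) (\<lambda>i \<omega>. B (ts (Suc i)) \<omega> - B (ts i) \<omega>) {..<n})"

text \<open>Exit time tau = inf{t >= 0 : y + B(2t) not in the interval} (infinite if never).\<close>
definition exit_time :: "real set \<Rightarrow> (real \<Rightarrow> 'a \<Rightarrow> real) \<Rightarrow> real \<Rightarrow> 'a \<Rightarrow> ereal" where
  "exit_time I B y \<omega> = Inf {ereal s | s. 0 \<le> s \<and> y + B (2 * s) \<omega> \<notin> I}"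

end

theory Submission
  imports Defs
begin

text \<open>Write \<open>\<phi>\<close> for the Gaussian kernel and \<open>G\<close> for the Neumann kernel of \<open>I = \<Lambda>\<close> at
  \<open>y \<in> I\<close>. Both are probability densities, \<open>G\<close> vanishes off \<open>I\<close>, and \<open>\<phi> \<le> G\<close> on \<open>I\<close>. Hence
  \<open>\<integral> |\<phi> - G| = 2 \<integral>\<^bsub>\<real> - I\<^esub> \<phi> = 2 P\<^sub>y(y + B\<^sub>2\<^sub>t \<notin> I) \<le> 2 P\<^sub>y(\<tau> \<le> t)\<close>, and the
  \<open>L\<^sup>2\<close> bound follows from \<open>|\<phi> - G| \<le> 1/|I| + 1/\<surd>t\<close>.

  The comparison \<open>\<phi> \<le> G\<close> is the method of images in integrated form. The cosine transform of
  \<open>G(y, \<cdot>)\<close> on \<open>I\<close> agrees with that of the Gaussian, so by a moment recursion and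
  Stone--Weierstrass both kernels integrate every continuous function of \<open>cos (\<pi>x/L)\<close> alike.
  Such functions are even and \<open>2L\<close>-periodic, and testing \<open>G - \<phi>\<close> against the nonnegative
  ones shows that it has no negative part on \<open>I\<close>.\<close>

section \<open>Cosine series on an interval\<close>

lemma integral_cos_int_multiple:
  fixes L :: real and k :: int
  assumes L: "L > 0"
  shows "(LINT x|lborel. cos (real_of_int k * pi * x / L) * indicator {0..L} x) = (if k = 0 then L else 0)"
proof (cases "k = 0")
  case True
  then show ?thesis using L by simp
next
  case False
  define c where "c = real_of_int k * pi / L"
  have c: "c \<noteq> 0" using False L by (simp add: c_def)
  have "(LINT x|lborel. indicator {0..L} x *\<^sub>R cos (c * x)) = sin (c * L) / c - sin (c * 0) / c"
  proof (rule integral_FTC_atLeastAtMost)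
    fix x
    show "((\<lambda>x. sin (c * x) / c) has_vector_derivative cos (c * x)) (at x within {0..L})"
      using c by (auto intro!: derivative_eq_intros simp: has_real_derivative_iff_has_vector_derivative[symmetric])
  qed (use L in \<open>auto intro!: continuous_intros\<close>)
  moreover have "sin (c * L) = 0"
    using L by (simp add: c_def sin_times_pi_eq_0)
  ultimately show ?thesis
    using False by (simp add: c_def mult.commute times_divide_eq_right)
qed

lemma integral_cos_mult_cos:
  fixes L :: real and m n :: nat
  assumes L: "L > 0"
  shows "(LINT x|lborel. cos (real m * pi * x / L) * cos (real n * pi * x / L) * indicator {0..L} x)
     = (if m = n then (if m = 0 then L else L / 2) else 0)"
proof -
  have eq: "cos (real m * pi * x / L) * cos (real n * pi * x / L) * indicator {0..L} x
     = (cos (real_of_int (int m - int n) * pi * x / L) * indicator {0..L} x) / 2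
       + (cos (real_of_int (int m + int n) * pi * x / L) * indicator {0..L} x) / 2" for x
  proof -
    have "cos (real m * pi * x / L) * cos (real n * pi * x / L)
        = (cos (real m * pi * x / L - real n * pi * x / L) + cos (real m * pi * x / L + real n * pi * x / L)) / 2"
      by (simp add: cos_diff cos_add)
    also have "real m * pi * x / L - real n * pi * x / L = real_of_int (int m - int n) * pi * x / L"
      using L by (simp add: field_simps)
    also have "real m * pi * x / L + real n * pi * x / L = real_of_int (int m + int n) * pi * x / L"
      using L by (simp add: field_simps)
    finally show ?thesis
      by (simp add: add_divide_distrib distrib_right del: of_int_diff of_int_add)
  qed
  have "integrable lborel (\<lambda>x. cos (real_of_int k * pi * x / L) * indicator {0..L} x)" for k :: int
    using L by (intro borel_integrable_atLeastAtMost continuous_intros) auto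
  then show ?thesis
    unfolding eq using L by (simp add: integral_cos_int_multiple del: of_int_diff of_int_add)
qed

text \<open>The Neumann kernel of an interval of length \<open>L\<close>, in coordinates measured from its left
  endpoint and not yet restricted to the interval.\<close>

definition neumann_weight :: "real \<Rightarrow> real \<Rightarrow> nat \<Rightarrow> real" where
  "neumann_weight L t n = exp (- ((real n)^2 * pi^2 * t / L^2))"

definition neumann_term :: "real \<Rightarrow> real \<Rightarrow> real \<Rightarrow> nat \<Rightarrow> real \<Rightarrow> real" where
  "neumann_term L t u n x =
     neumann_weight L t (Suc n) * cos (real (Suc n) * pi * u / L) * cos (real (Suc n) * pi * x / L)"

definition neumann_series :: "real \<Rightarrow> real \<Rightarrow> real \<Rightarrow> real \<Rightarrow> real" where
  "neumann_series L t u x = 1 / L + (2 / L) * (\<Sum>n. neumann_term L t u n x)"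

lemma neumann_weight_pos: "neumann_weight L t n > 0"
  by (simp add: neumann_weight_def)

lemma summable_neumann_weight:
  assumes L: "L > 0" and t: "t > 0"
  shows "summable (\<lambda>n. neumann_weight L t (Suc n))"
proof -
  define c where "c = pi^2 * t / L^2"
  have c: "c > 0" using L t by (simp add: c_def)
  have "summable (\<lambda>n. exp (- c) ^ n)"
    using c by (intro summable_geometric) simp
  moreover have "norm (neumann_weight L t (Suc n)) \<le> exp (- c) ^ n" for n
  proof -
    have "real n \<le> (real (Suc n))^2"
      by (simp add: power2_eq_square algebra_simps)
    then have "c * real n \<le> (real (Suc n))^2 * c"
      using c by (simp add: mult.commute)
    then show ?thesis
      by (simp add: neumann_weight_def c_def exp_of_nat_mult[symmetric] mult.commute)
  qed
  ultimately show ?thesis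
    by (rule summable_comparison_test'[where N=0])
qed

lemma abs_neumann_term_le: "\<bar>neumann_term L t u n x\<bar> \<le> neumann_weight L t (Suc n)"
proof -
  have "\<bar>cos (real (Suc n) * pi * u / L) * cos (real (Suc n) * pi * x / L)\<bar> \<le> 1"
    by (simp add: abs_mult mult_le_one)
  from mult_left_le[OF this less_imp_le[OF neumann_weight_pos[of L t "Suc n"]]] show ?thesis
    unfolding neumann_term_def by (simp add: abs_mult abs_of_pos[OF neumann_weight_pos] mult.assoc)
qed

lemma summable_neumann_term:
  assumes "L > 0" "t > 0"
  shows "summable (\<lambda>n. neumann_term L t u n x)" "summable (\<lambda>n. \<bar>neumann_term L t u n x\<bar>)"
  using summable_comparison_test'[OF summable_neumann_weight[OF assms], of 0 "\<lambda>n. neumann_term L t u n x"]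
    summable_comparison_test'[OF summable_neumann_weight[OF assms], of 0 "\<lambda>n. \<bar>neumann_term L t u n x\<bar>"]
    abs_neumann_term_le
  by auto

lemma continuous_on_neumann_series:
  assumes L: "L > 0" and t: "t > 0"
  shows "continuous_on UNIV (neumann_series L t u)"
proof -
  have "uniform_limit UNIV (\<lambda>n x. \<Sum>i<n. neumann_term L t u i x) (\<lambda>x. \<Sum>i. neumann_term L t u i x) sequentially"
    by (rule Weierstrass_m_test[OF _ summable_neumann_weight[OF L t]]) (simp add: abs_neumann_term_le)
  then have "continuous_on UNIV (\<lambda>x. \<Sum>i. neumann_term L t u i x)"
    by (rule uniform_limit_theorem[rotated])
       (use L in \<open>auto simp: neumann_term_def intro!: always_eventually continuous_intros\<close>)
  then show ?thesis
    unfolding neumann_series_def[abs_def] by (intro continuous_intros)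
qed

lemma integrable_neumann_series:
  assumes "L > 0" "t > 0" "continuous_on UNIV f"
  shows "integrable lborel (\<lambda>x. neumann_series L t u x * f x * indicator {0..L} x)"
  using continuous_on_neumann_series[OF assms(1,2)] assms(3)
  by (intro borel_integrable_atLeastAtMost continuous_on_interior[of UNIV]) (auto intro!: continuous_intros)

lemma integral_neumann_term_cos:
  assumes L: "L > 0"
  shows "(LINT x|lborel. neumann_term L t u n x * (cos (real m * pi * x / L) * indicator {0..L} x))
       = (if Suc n = m then neumann_weight L t m * cos (real m * pi * u / L) * (L / 2) else 0)"
proof -
  have "neumann_term L t u n x * (cos (real m * pi * x / L) * indicator {0..L} x)
      = neumann_weight L t (Suc n) * cos (real (Suc n) * pi * u / L) *
          (cos (real (Suc n) * pi * x / L) * cos (real m * pi * x / L) * indicator {0..L} x)" for x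
    unfolding neumann_term_def by (simp only: mult_ac)
  then have "(LINT x|lborel. neumann_term L t u n x * (cos (real m * pi * x / L) * indicator {0..L} x))
      = neumann_weight L t (Suc n) * cos (real (Suc n) * pi * u / L) *
          (LINT x|lborel. cos (real (Suc n) * pi * x / L) * cos (real m * pi * x / L) * indicator {0..L} x)"
    by (simp only: integral_mult_right_zero)
  then show ?thesis
    using L by (simp add: integral_cos_mult_cos del: of_nat_Suc)
qed

text \<open>Termwise integration is justified by the summable majorant \<open>neumann_weight L t (Suc n)\<close>.\<close>

lemma integral_suminf_neumann_term_cos:
  fixes u :: real and m :: nat
  assumes L: "L > 0" and t: "t > 0"
  defines "f \<equiv> \<lambda>n x. neumann_term L t u n x * (cos (real m * pi * x / L) * indicator {0..L} x)"
  shows "integrable lborel (\<lambda>x. \<Sum>n. f n x)"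
    and "(LINT x|lborel. (\<Sum>n. f n x))
      = (if m = 0 then 0 else neumann_weight L t m * cos (real m * pi * u / L) * (L / 2))"
proof -
  have f_le: "\<bar>f n x\<bar> \<le> neumann_weight L t (Suc n) * indicator {0..L} x" for n x
    unfolding f_def abs_mult
    by (intro mult_mono abs_neumann_term_le) (auto simp: indicator_def less_imp_le[OF neumann_weight_pos])
  have intf: "integrable lborel (f n)" for n
    unfolding f_def neumann_term_def
    by (simp add: mult.assoc[symmetric])
      (rule borel_integrable_atLeastAtMost, use L in \<open>auto intro!: continuous_intros\<close>)
  have "(LINT x|lborel. norm (f n x)) \<le> (LINT x|lborel. neumann_weight L t (Suc n) * indicator {0..L} x)" for n
    using intf L f_le by (intro integral_mono) (auto simp: emeasure_lborel_Icc)
  then have "(LINT x|lborel. norm (f n x)) \<le> neumann_weight L t (Suc n) * L" for n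
    using L by simp
  then have summable_int_norm: "summable (\<lambda>n. LINT x|lborel. norm (f n x))"
    by (intro summable_comparison_test'[where N=0, OF summable_mult2[OF summable_neumann_weight[OF L t]]]) auto
  have "\<bar>f n x\<bar> \<le> neumann_weight L t (Suc n)" for n x
    by (rule order_trans[OF f_le]) (auto simp: indicator_def less_imp_le[OF neumann_weight_pos])
  then have summable_norm: "AE x in lborel. summable (\<lambda>n. norm (f n x))"
    by (intro AE_I2 summable_comparison_test'[where N=0, OF summable_neumann_weight[OF L t]]) auto
  show "integrable lborel (\<lambda>x. \<Sum>n. f n x)"
    by (rule integrable_suminf[OF intf summable_norm summable_int_norm])
  have "(LINT x|lborel. (\<Sum>n. f n x)) = (\<Sum>n. LINT x|lborel. f n x)"
    by (rule integral_suminf[OF intf summable_norm summable_int_norm])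
  also have "\<dots> = (if m = 0 then 0 else neumann_weight L t m * cos (real m * pi * u / L) * (L / 2))"
  proof (cases m)
    case (Suc k)
    have "(\<lambda>n. LINT x|lborel. f n x)
        = (\<lambda>n. if n = k then neumann_weight L t m * cos (real m * pi * u / L) * (L / 2) else 0)"
      unfolding f_def integral_neumann_term_cos[OF L] Suc by simp
    then show ?thesis
      using Suc by (simp add: sums_single[THEN sums_unique, symmetric])
  qed (simp only: f_def integral_neumann_term_cos[OF L], simp)
  finally show "(LINT x|lborel. (\<Sum>n. f n x))
      = (if m = 0 then 0 else neumann_weight L t m * cos (real m * pi * u / L) * (L / 2))" .
qed

lemma neumann_series_cos_coeff:
  assumes L: "L > 0" and t: "t > 0"
  shows "(LINT x|lborel. neumann_series L t u x * cos (real m * pi * x / L) * indicator {0..L} x)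
         = neumann_weight L t m * cos (real m * pi * u / L)"
proof -
  define f where "f n x = neumann_term L t u n x * (cos (real m * pi * x / L) * indicator {0..L} x)" for n x
  note series = integral_suminf_neumann_term_cos[OF L t, of u m, folded f_def]
  have decomp: "neumann_series L t u x * cos (real m * pi * x / L) * indicator {0..L} x
     = 1 / L * (cos (real 0 * pi * x / L) * cos (real m * pi * x / L) * indicator {0..L} x)
       + 2 / L * (\<Sum>n. f n x)" for x
    using suminf_mult2[OF summable_neumann_term(1)[OF L t], of u x "cos (real m * pi * x / L) * indicator {0..L} x"]
    by (simp add: neumann_series_def f_def algebra_simps)
  have "integrable lborel (\<lambda>x. cos (real 0 * pi * x / L) * cos (real m * pi * x / L) * indicator {0..L} x)"
    using L by (intro borel_integrable_atLeastAtMost continuous_intros) auto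
  then have "(LINT x|lborel. neumann_series L t u x * cos (real m * pi * x / L) * indicator {0..L} x)
     = 1 / L * (LINT x|lborel. cos (real 0 * pi * x / L) * cos (real m * pi * x / L) * indicator {0..L} x)
       + 2 / L * (LINT x|lborel. (\<Sum>n. f n x))"
    unfolding decomp using series(1)
    by (simp only: Bochner_Integration.integral_add integrable_mult_right integral_mult_right_zero)
  also have "\<dots> = neumann_weight L t m * cos (real m * pi * u / L)"
    unfolding series(2) integral_cos_mult_cos[OF L] using L
    by (cases "m = 0") (simp_all add: neumann_weight_def)
  finally show ?thesis .
qed

lemma arctan_diff_ge:
  assumes "0 \<le> a" "a < b"
  shows "(b - a) / (1 + b^2) \<le> arctan b - arctan a"
proof -
  obtain z where z: "a < z" "z < b" "arctan b - arctan a = (b - a) * inverse (1 + z^2)"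
    using MVT2[OF assms(2), of arctan "\<lambda>x. inverse (1 + x^2)"] DERIV_arctan by blast
  have "z^2 \<le> b^2"
    using z assms by (intro power_mono) auto
  then have "inverse (1 + b^2) \<le> inverse (1 + z^2)"
    by (intro le_imp_inverse_le) (auto simp: add_pos_nonneg)
  then show ?thesis
    using z assms by (simp add: divide_inverse mult_left_mono)
qed

text \<open>A Riemann sum of \<open>\<integral>\<^sub>0\<^sup>\<infinity> dx / (1 + s\<^sup>2x\<^sup>2) = \<pi> / (2s)\<close>.\<close>

lemma sum_inverse_one_plus_square_le_arctan:
  assumes s: "s > 0"
  shows "(\<Sum>n<N. 1 / (1 + s^2 * (real (Suc n))^2)) \<le> arctan (s * real N) / s"
proof (induction N)
  case (Suc N)
  have "(s * real (Suc N) - s * real N) / (1 + (s * real (Suc N))^2)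
      \<le> arctan (s * real (Suc N)) - arctan (s * real N)"
    using s by (intro arctan_diff_ge) (auto simp: algebra_simps)
  moreover have "s * real (Suc N) - s * real N = s"
    by (simp add: algebra_simps)
  ultimately have "s / (1 + (s * real (Suc N))^2) \<le> arctan (s * real (Suc N)) - arctan (s * real N)"
    by simp
  then have "1 / (1 + s^2 * (real (Suc N))^2) \<le> (arctan (s * real (Suc N)) - arctan (s * real N)) / s"
    using s by (simp add: field_simps power_mult_distrib del: of_nat_Suc)
  then show ?case
    using Suc.IH by (simp add: diff_divide_distrib del: of_nat_Suc)
qed simp

lemma suminf_neumann_weight_le:
  assumes L: "L > 0" and t: "t > 0"
  shows "(\<Sum>n. neumann_weight L t (Suc n)) \<le> L / (2 * sqrt t)"
proof -
  define s where "s = pi * sqrt t / L"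
  have s: "s > 0" "s^2 = pi^2 * t / L^2"
    using L t by (simp_all add: s_def power_divide power_mult_distrib)
  have term_le: "neumann_weight L t (Suc n) \<le> 1 / (1 + s^2 * (real (Suc n))^2)" for n
  proof -
    have "neumann_weight L t (Suc n) = 1 / exp (s^2 * (real (Suc n))^2)"
      unfolding neumann_weight_def s(2) by (simp add: exp_minus field_simps del: of_nat_Suc)
    moreover have "1 + s^2 * (real (Suc n))^2 \<le> exp (s^2 * (real (Suc n))^2)"
      by (rule exp_ge_add_one_self)
    moreover have "0 < 1 + s^2 * (real (Suc n))^2"
      by (intro add_pos_nonneg) auto
    ultimately show ?thesis
      by (simp add: frac_le)
  qed
  have "(\<Sum>n. neumann_weight L t (Suc n)) \<le> (pi / 2) / s"
  proof (rule suminf_le_const[OF summable_neumann_weight[OF L t]])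
    fix N
    have "(\<Sum>n<N. neumann_weight L t (Suc n)) \<le> (\<Sum>n<N. 1 / (1 + s^2 * (real (Suc n))^2))"
      by (intro sum_mono term_le)
    also have "\<dots> \<le> arctan (s * real N) / s"
      by (rule sum_inverse_one_plus_square_le_arctan[OF s(1)])
    also have "\<dots> \<le> (pi / 2) / s"
      using arctan_ubound[of "s * real N"] s by (intro divide_right_mono) auto
    finally show "(\<Sum>n<N. neumann_weight L t (Suc n)) \<le> (pi / 2) / s" .
  qed
  also have "\<dots> = L / (2 * sqrt t)"
    using L t by (simp add: s_def field_simps)
  finally show ?thesis .
qed

lemma abs_neumann_series_le:
  assumes L: "L > 0" and t: "t > 0"
  shows "\<bar>neumann_series L t u x\<bar> \<le> 1 / L + 1 / sqrt t"
proof -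
  have "\<bar>\<Sum>n. neumann_term L t u n x\<bar> \<le> (\<Sum>n. \<bar>neumann_term L t u n x\<bar>)"
    by (rule summable_rabs[OF summable_neumann_term(2)[OF L t]])
  also have "\<dots> \<le> (\<Sum>n. neumann_weight L t (Suc n))"
    by (intro suminf_le summable_neumann_term(2)[OF L t] summable_neumann_weight[OF L t] abs_neumann_term_le)
  also have "\<dots> \<le> L / (2 * sqrt t)"
    by (rule suminf_neumann_weight_le[OF L t])
  finally have "2 / L * \<bar>\<Sum>n. neumann_term L t u n x\<bar> \<le> 2 / L * (L / (2 * sqrt t))"
    using L by (intro mult_left_mono) auto
  then have "\<bar>2 / L * (\<Sum>n. neumann_term L t u n x)\<bar> \<le> 1 / sqrt t"
    using L by (simp add: abs_mult)
  then show ?thesis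
    unfolding neumann_series_def using L by (intro order_trans[OF abs_triangle_ineq]) simp
qed

lemma integral_neumann_series:
  assumes "L > 0" "t > 0"
  shows "(LINT x|lborel. neumann_series L t u x * indicator {0..L} x) = 1"
  using neumann_series_cos_coeff[OF assms, of u 0] by (simp add: neumann_weight_def)

section \<open>Gaussian integrals\<close>

lemma heat_kernel_R_eq_normal_density:
  "t > 0 \<Longrightarrow> heat_kernel_R t y \<eta> = normal_density y (sqrt (2 * t)) \<eta>"
  unfolding heat_kernel_R_def normal_density_def
  by (simp add: real_sqrt_mult field_simps power2_commute)

lemma heat_kernel_R_shift: "heat_kernel_R t y \<eta> = heat_kernel_R t 0 (\<eta> - y)"
  unfolding heat_kernel_R_def by (simp add: power2_commute)

lemma heat_kernel_R_nonneg: "t \<ge> 0 \<Longrightarrow> heat_kernel_R t y \<eta> \<ge> 0"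
  unfolding heat_kernel_R_def by simp

lemma heat_kernel_R_le:
  assumes t: "t > 0"
  shows "heat_kernel_R t y \<eta> \<le> 1 / sqrt t"
proof -
  have "exp (- ((y - \<eta>)^2) / (4 * t)) \<le> 1"
    using t by simp
  moreover have "sqrt t \<le> sqrt (4 * pi * t)"
    using t pi_gt3 by (intro real_sqrt_le_mono) auto
  ultimately show ?thesis
    unfolding heat_kernel_R_def using t by (intro frac_le) auto
qed

lemma integrable_heat_kernel_R:
  assumes "t > 0"
  shows "integrable lborel (heat_kernel_R t y)"
proof -
  have "heat_kernel_R t y = normal_density y (sqrt (2 * t))"
    using assms by (auto simp: heat_kernel_R_eq_normal_density)
  then show ?thesis
    using assms by (simp add: integrable_normal_density)
qed

lemma integral_heat_kernel_R: "t > 0 \<Longrightarrow> (LINT \<eta>|lborel. heat_kernel_R t y \<eta>) = 1"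
  by (simp add: heat_kernel_R_eq_normal_density integral_normal_density)

lemma integrable_mult_bounded:
  fixes w g :: "'a \<Rightarrow> real"
  assumes w: "integrable M w" and g: "g \<in> borel_measurable M"
    and bound: "\<And>x. x \<in> space M \<Longrightarrow> \<bar>g x\<bar> \<le> B"
  shows "integrable M (\<lambda>x. w x * g x)"
proof (rule Bochner_Integration.integrable_bound[where f="\<lambda>x. B * w x"])
  show "integrable M (\<lambda>x. B * w x)"
    using w by simp
  show "(\<lambda>x. w x * g x) \<in> borel_measurable M"
    using w g by measurable
  show "AE x in M. norm (w x * g x) \<le> norm (B * w x)"
  proof (rule AE_I2)
    fix x
    assume "x \<in> space M"
    then have "\<bar>g x\<bar> \<le> \<bar>B\<bar>"
      using bound[of x] by linarith
    from mult_left_mono[OF this, of "\<bar>w x\<bar>"] show "norm (w x * g x) \<le> norm (B * w x)"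
      by (simp add: abs_mult mult.commute)
  qed
qed

lemma integral_std_normal_density_cos:
  "(LINT x|lborel. std_normal_density x * cos (w * x)) = exp (- (w^2) / 2)"
proof -
  interpret real_distribution std_normal_distribution
    by (rule real_dist_normal_dist)
  have "complex_integrable std_normal_distribution (\<lambda>x. iexp (w * x))"
    by (rule integrable_const_bound[where B=1]) auto
  then have "Re (char std_normal_distribution w) = (LINT x|std_normal_distribution. cos (w * x))"
    unfolding char_def by (simp add: integral_Re[symmetric] Re_exp)
  also have "\<dots> = (LINT x|lborel. std_normal_density x * cos (w * x))"
    by (subst integral_density) (auto simp: normal_density_nonneg)
  finally show ?thesis
    by (simp add: char_std_normal_distribution)
qed

lemma integral_std_normal_density_sin: "(LINT x|lborel. std_normal_density x * sin (w * x)) = 0"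
proof -
  let ?f = "\<lambda>x. std_normal_density x * sin (w * x)"
  have "integral\<^sup>L lborel ?f = \<bar>-1\<bar> *\<^sub>R (LINT x|lborel. ?f (0 + (-1) * x))"
    by (rule lborel_integral_real_affine) simp
  also have "\<dots> = - integral\<^sup>L lborel ?f"
    by (simp add: normal_density_def)
  finally show ?thesis
    by simp
qed

lemma integral_heat_kernel_R_cos:
  assumes t: "t > 0"
  shows "(LINT z|lborel. heat_kernel_R t 0 z * cos (w * (u + z))) = exp (- (w^2 * t)) * cos (w * u)"
proof -
  define s where "s = sqrt (2 * t)"
  have s: "s > 0" "s^2 = 2 * t"
    using t by (simp_all add: s_def)
  have std: "s * heat_kernel_R t 0 (s * x) = std_normal_density x" for x
    using s t unfolding heat_kernel_R_def normal_density_def s_def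
    by (simp add: real_sqrt_mult field_simps power_mult_distrib)
  have integrable: "integrable lborel (\<lambda>x. std_normal_density x * f (w * s * x))"
    if "f = sin \<or> f = cos" for f
    using that
    by (intro integrable_mult_bounded[where B=1] integrable_normal_density) (auto intro!: continuous_intros)
  have "(LINT z|lborel. heat_kernel_R t 0 z * cos (w * (u + z)))
      = \<bar>s\<bar> *\<^sub>R (LINT x|lborel. heat_kernel_R t 0 (0 + s * x) * cos (w * (u + (0 + s * x))))"
    by (rule lborel_integral_real_affine) (use s in simp)
  also have "\<dots> = (LINT x|lborel. s * (heat_kernel_R t 0 (s * x) * cos (w * (u + s * x))))"
    using s(1) by simp
  also have "\<dots> = (LINT x|lborel. cos (w * u) * (std_normal_density x * cos (w * s * x))
                     - sin (w * u) * (std_normal_density x * sin (w * s * x)))"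
  proof (rule Bochner_Integration.integral_cong[OF refl])
    fix x
    have cos_sum: "cos (w * (u + s * x)) = cos (w * u) * cos (w * s * x) - sin (w * u) * sin (w * s * x)"
      by (simp add: distrib_left cos_add mult.assoc)
    show "s * (heat_kernel_R t 0 (s * x) * cos (w * (u + s * x)))
        = cos (w * u) * (std_normal_density x * cos (w * s * x))
          - sin (w * u) * (std_normal_density x * sin (w * s * x))"
      unfolding cos_sum std[symmetric] by (simp add: algebra_simps)
  qed
  also have "\<dots> = cos (w * u) * exp (- ((w * s)^2) / 2)"
    using integrable by (simp add: integral_std_normal_density_cos integral_std_normal_density_sin)
  also have "\<dots> = exp (- (w^2 * t)) * cos (w * u)"
    using s by (simp add: power_mult_distrib)
  finally show ?thesis .
qed

section \<open>Weights with equal cosine transforms\<close>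

definition cos_moment :: "'a measure \<Rightarrow> ('a \<Rightarrow> real) \<Rightarrow> ('a \<Rightarrow> real) \<Rightarrow> nat \<Rightarrow> nat \<Rightarrow> real" where
  "cos_moment M w \<theta> k n = (LINT x|M. w x * (cos (\<theta> x) ^ k * cos (real n * \<theta> x)))"

lemma cos_mult_cos_multiple:
  "cos A * cos (real n * A) = (cos (real (Suc n) * A) + cos (real (if n = 0 then 1 else n - 1) * A)) / 2"
proof (cases n)
  case (Suc m)
  have "cos A * cos (real n * A) = (cos (real n * A - A) + cos (real n * A + A)) / 2"
    by (simp add: cos_diff cos_add)
  then show ?thesis
    using Suc by (simp add: algebra_simps)
qed (simp add: power2_eq_square)

lemma cos_moment_Suc:
  assumes w: "integrable M w" and \<theta>: "\<theta> \<in> borel_measurable M"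
  shows "cos_moment M w \<theta> (Suc k) n
    = (cos_moment M w \<theta> k (Suc n) + cos_moment M w \<theta> k (if n = 0 then 1 else n - 1)) / 2"
proof -
  define n' where "n' = (if n = 0 then 1 else n - 1)"
  have integrable: "integrable M (\<lambda>x. w x * (cos (\<theta> x) ^ k * cos (real j * \<theta> x)))" for j
    using \<theta> by (intro integrable_mult_bounded[OF w, where B=1])
      (auto simp: abs_mult power_abs intro!: mult_le_one power_le_one)
  have split: "w x * (cos (\<theta> x) ^ Suc k * cos (real n * \<theta> x))
      = (w x * (cos (\<theta> x) ^ k * cos (real (Suc n) * \<theta> x)) + w x * (cos (\<theta> x) ^ k * cos (real n' * \<theta> x))) / 2"
    for x
  proof -
    have "cos (\<theta> x) ^ Suc k * cos (real n * \<theta> x) = cos (\<theta> x) ^ k * (cos (\<theta> x) * cos (real n * \<theta> x))"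
      by (simp add: mult_ac)
    then show ?thesis
      unfolding cos_mult_cos_multiple n'_def[symmetric] by (simp add: algebra_simps add_divide_distrib)
  qed
  show ?thesis
    unfolding cos_moment_def n'_def[symmetric] split
    using integrable[of "Suc n"] integrable[of n'] by (simp del: of_nat_Suc)
qed

lemma cos_moment_eqI:
  assumes "integrable M w" "\<theta> \<in> borel_measurable M" "integrable M' w'" "\<theta>' \<in> borel_measurable M'"
    and "\<And>n. cos_moment M w \<theta> 0 n = cos_moment M' w' \<theta>' 0 n"
  shows "cos_moment M w \<theta> k n = cos_moment M' w' \<theta>' k n"
  using assms by (induction k arbitrary: n) (simp_all add: cos_moment_Suc)

lemma cos_in_Icc: "cos (y::real) \<in> {-1..1}"
  using abs_cos_le_one[of y] by (auto simp: abs_le_iff)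

lemma measurable_continuous_on_cos:
  fixes f :: "real \<Rightarrow> real"
  assumes f: "continuous_on {-1..1} f" and \<psi>: "\<psi> \<in> borel_measurable M"
  shows "(\<lambda>x. f (cos (\<psi> x))) \<in> borel_measurable M"
proof -
  define clamp where "clamp c = max (-1) (min 1 c)" for c :: real
  text \<open>Clamping to \<open>[-1, 1]\<close> extends \<open>f\<close> continuously without changing \<open>f \<circ> cos\<close>.\<close>
  have "continuous_on UNIV (\<lambda>c. f (clamp c))"
    by (rule continuous_on_compose2[OF f]) (auto simp: clamp_def intro!: continuous_intros)
  moreover have "(\<lambda>x. cos (\<psi> x)) \<in> borel_measurable M"
    using \<psi> by measurable
  moreover have "f (cos y) = f (clamp (cos y))" for y :: real
    using cos_in_Icc[of y] by (simp add: clamp_def)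
  ultimately show ?thesis
    using borel_measurable_continuous_on by simp
qed

lemma integrable_mult_continuous_on_cos:
  fixes f :: "real \<Rightarrow> real"
  assumes f: "continuous_on {-1..1} f" and w: "integrable M w" and \<psi>: "\<psi> \<in> borel_measurable M"
  shows "integrable M (\<lambda>x. w x * f (cos (\<psi> x)))"
proof -
  obtain B where "\<forall>c\<in>{-1..1}. \<bar>f c\<bar> \<le> B"
    using compact_imp_bounded[OF compact_continuous_image[OF f compact_Icc]] by (auto simp: bounded_iff)
  then show ?thesis
    using cos_in_Icc by (intro integrable_mult_bounded[OF w measurable_continuous_on_cos[OF f \<psi>]]) blast
qed

lemma abs_integral_mult_diff_le:
  fixes w f g :: "'a \<Rightarrow> real"
  assumes "integrable M (\<lambda>x. w x * f x)" "integrable M (\<lambda>x. w x * g x)" "integrable M w"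
    and "\<And>x. x \<in> space M \<Longrightarrow> \<bar>f x - g x\<bar> \<le> e"
  shows "\<bar>(LINT x|M. w x * f x) - (LINT x|M. w x * g x)\<bar> \<le> e * (LINT x|M. \<bar>w x\<bar>)"
proof -
  have "\<bar>(LINT x|M. w x * f x) - (LINT x|M. w x * g x)\<bar> = norm (LINT x|M. w x * f x - w x * g x)"
    using assms(1,2) by simp
  also have "\<dots> \<le> (LINT x|M. norm (w x * f x - w x * g x))"
    by (rule integral_norm_bound)
  also have "\<dots> \<le> (LINT x|M. e * \<bar>w x\<bar>)"
  proof (rule integral_mono)
    show "integrable M (\<lambda>x. norm (w x * f x - w x * g x))" "integrable M (\<lambda>x. e * \<bar>w x\<bar>)"
      using assms(1-3) by auto
    fix x
    assume "x \<in> space M"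
    have "norm (w x * f x - w x * g x) = \<bar>w x\<bar> * \<bar>f x - g x\<bar>"
      by (simp add: abs_mult[symmetric] right_diff_distrib)
    also have "\<dots> \<le> \<bar>w x\<bar> * e"
      using assms(4) \<open>x \<in> space M\<close> by (intro mult_left_mono) auto
    finally show "norm (w x * f x - w x * g x) \<le> e * \<bar>w x\<bar>"
      by (simp add: mult.commute)
  qed
  finally show ?thesis
    by simp
qed

lemma integral_mult_polynomial_cos_eq:
  assumes w: "integrable M w" and \<theta>: "\<theta> \<in> borel_measurable M"
    and w': "integrable M' w'" and \<theta>': "\<theta>' \<in> borel_measurable M'"
    and transform: "\<And>n. cos_moment M w \<theta> 0 n = cos_moment M' w' \<theta>' 0 n"
  shows "(LINT x|M. w x * (\<Sum>i\<le>N. a i * cos (\<theta> x) ^ i)) = (LINT x|M'. w' x * (\<Sum>i\<le>N. a i * cos (\<theta>' x) ^ i))"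
proof -
  have moment: "cos_moment M w \<theta> i 0 = cos_moment M' w' \<theta>' i 0" for i
    by (rule cos_moment_eqI[OF w \<theta> w' \<theta>' transform])
  have power: "continuous_on {-1..1} (\<lambda>c::real. c ^ i)" for i
    by (intro continuous_intros)
  have "integrable M (\<lambda>x. w x * (cos (\<theta> x) ^ i * cos (real 0 * \<theta> x)))"
    "integrable M' (\<lambda>x. w' x * (cos (\<theta>' x) ^ i * cos (real 0 * \<theta>' x)))" for i
    using integrable_mult_continuous_on_cos[OF power] w \<theta> w' \<theta>' by auto
  then show ?thesis
    using moment unfolding cos_moment_def
    by (simp add: sum_distrib_left mult.left_commute)
qed

lemma integral_mult_continuous_on_cos_eq:
  fixes h :: "real \<Rightarrow> real"
  assumes w: "integrable M w" and \<theta>: "\<theta> \<in> borel_measurable M"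
    and w': "integrable M' w'" and \<theta>': "\<theta>' \<in> borel_measurable M'"
    and transform: "\<And>n. cos_moment M w \<theta> 0 n = cos_moment M' w' \<theta>' 0 n"
    and h: "continuous_on {-1..1} h"
  shows "(LINT x|M. w x * h (cos (\<theta> x))) = (LINT x|M'. w' x * h (cos (\<theta>' x)))"
proof -
  define A where "A f = (LINT x|M. w x * f (cos (\<theta> x)))" for f :: "real \<Rightarrow> real"
  define A' where "A' f = (LINT x|M'. w' x * f (cos (\<theta>' x)))" for f :: "real \<Rightarrow> real"
  define W where "W = (LINT x|M. \<bar>w x\<bar>) + (LINT x|M'. \<bar>w' x\<bar>)"
  have W: "W \<ge> 0"
    unfolding W_def by (intro add_nonneg_nonneg integral_nonneg_AE) auto
  have polynomial: "A (\<lambda>c. \<Sum>i\<le>N. a i * c ^ i) = A' (\<lambda>c. \<Sum>i\<le>N. a i * c ^ i)" for a N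
    unfolding A_def A'_def by (rule integral_mult_polynomial_cos_eq[OF w \<theta> w' \<theta>' transform])
  have arbitrarily_close: "\<bar>A h - A' h\<bar> \<le> e" if e: "e > 0" for e
  proof -
    obtain p where p: "real_polynomial_function p"
      and close: "\<And>c. c \<in> {-1..1} \<Longrightarrow> \<bar>h c - p c\<bar> < e / (W + 1)"
      using Stone_Weierstrass_real_polynomial_function[OF compact_Icc h, of "e / (W + 1)"] e W by auto
    obtain a N where pa: "p = (\<lambda>c. \<Sum>i\<le>N. a i * c ^ i)"
      using p real_polynomial_function_iff_sum by blast
    have p_cont: "continuous_on {-1..1} p"
      unfolding pa by (intro continuous_intros)
    have close': "\<bar>h (cos y) - p (cos y)\<bar> \<le> e / (W + 1)" for y
      using close[OF cos_in_Icc[of y]] by simp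
    have approx: "\<bar>A h - A p\<bar> \<le> e / (W + 1) * (LINT x|M. \<bar>w x\<bar>)"
      unfolding A_def
      by (rule abs_integral_mult_diff_le[OF integrable_mult_continuous_on_cos[OF h w \<theta>]
            integrable_mult_continuous_on_cos[OF p_cont w \<theta>] w close'])
    have approx': "\<bar>A' h - A' p\<bar> \<le> e / (W + 1) * (LINT x|M'. \<bar>w' x\<bar>)"
      unfolding A'_def
      by (rule abs_integral_mult_diff_le[OF integrable_mult_continuous_on_cos[OF h w' \<theta>']
            integrable_mult_continuous_on_cos[OF p_cont w' \<theta>'] w' close'])
    have "\<bar>A h - A' h\<bar> \<le> \<bar>A h - A p\<bar> + \<bar>A' h - A' p\<bar>"
      using polynomial[of a N] unfolding pa by linarith
    also have "\<dots> \<le> e / (W + 1) * (LINT x|M. \<bar>w x\<bar>) + e / (W + 1) * (LINT x|M'. \<bar>w' x\<bar>)"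
      by (rule add_mono[OF approx approx'])
    also have "\<dots> = e / (W + 1) * W"
      by (simp add: W_def distrib_left)
    also have "\<dots> \<le> e"
      using e W by (simp add: field_simps)
    finally show ?thesis .
  qed
  have "\<bar>A h - A' h\<bar> \<le> 0"
    using field_le_epsilon[of "\<bar>A h - A' h\<bar>" 0] arbitrarily_close by simp
  then show ?thesis
    unfolding A_def A'_def by simp
qed

section \<open>The Neumann kernel dominates the Gaussian\<close>

lemma cos_transform_neumann_series_eq_heat_kernel:
  assumes L: "L > 0" and t: "t > 0"
  shows "cos_moment lborel (\<lambda>x. neumann_series L t u x * indicator {0..L} x) (\<lambda>x. pi * x / L) 0 n
       = cos_moment lborel (heat_kernel_R t 0) (\<lambda>z. pi * (u + z) / L) 0 n"
proof -
  have "cos_moment lborel (\<lambda>x. neumann_series L t u x * indicator {0..L} x) (\<lambda>x. pi * x / L) 0 n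
      = (LINT x|lborel. neumann_series L t u x * cos (real n * pi * x / L) * indicator {0..L} x)"
    unfolding cos_moment_def by (simp add: mult_ac)
  also have "\<dots> = neumann_weight L t n * cos (real n * pi * u / L)"
    by (rule neumann_series_cos_coeff[OF L t])
  also have "\<dots> = (LINT z|lborel. heat_kernel_R t 0 z * cos (real n * pi / L * (u + z)))"
    unfolding integral_heat_kernel_R_cos[OF t] neumann_weight_def
    by (simp add: power_divide power_mult_distrib mult_ac)
  also have "\<dots> = cos_moment lborel (heat_kernel_R t 0) (\<lambda>z. pi * (u + z) / L) 0 n"
    unfolding cos_moment_def by (simp add: mult_ac)
  finally show ?thesis .
qed

lemma integral_neumann_series_continuous_on_cos:
  fixes h :: "real \<Rightarrow> real"
  assumes L: "L > 0" and t: "t > 0" and h: "continuous_on {-1..1} h"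
  shows "(LINT x|lborel. neumann_series L t u x * indicator {0..L} x * h (cos (pi * x / L)))
       = (LINT z|lborel. heat_kernel_R t 0 z * h (cos (pi * (u + z) / L)))"
proof (rule integral_mult_continuous_on_cos_eq[OF _ _ _ _ cos_transform_neumann_series_eq_heat_kernel[OF L t] h])
  show "integrable lborel (\<lambda>x. neumann_series L t u x * indicator {0..L} x)"
    using integrable_neumann_series[OF L t, of "\<lambda>_. 1"] by simp
qed (use integrable_heat_kernel_R[OF t] in auto)

lemma continuous_nonneg_integral_eq_0D:
  fixes f :: "real \<Rightarrow> real"
  assumes f: "continuous_on {a..b} f" and nonneg: "\<And>x. x \<in> {a..b} \<Longrightarrow> f x \<ge> 0"
    and zero: "(LINT x|lborel. f x * indicator {a..b} x) = 0" and ab: "a < b" and x: "x \<in> {a..b}"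
  shows "f x = 0"
proof -
  have "set_integrable lborel {a..b} f"
    by (rule borel_integrable_atLeastAtMost'[OF f])
  then have "f integrable_on {a..b}" "integral {a..b} f = 0"
    using zero set_borel_integral_eq_integral[of "{a..b}" f]
    by (simp_all add: set_lebesgue_integral_def mult.commute)
  then have "(f has_integral 0) (cbox a b)"
    by (metis has_integral_integral box_real(2))
  then show ?thesis
    using has_integral_0_cbox_imp_0[of a b f x] f nonneg x ab by auto
qed

text \<open>The test function is the negative part of \<open>D\<close> read through \<open>arccos\<close>, which inverts
  \<open>cos (\<pi>x/L)\<close> on \<open>[0, L]\<close>.\<close>

lemma nonneg_if_cos_tests_nonneg:
  fixes D :: "real \<Rightarrow> real"
  assumes L: "L > 0" and D: "continuous_on {0..L} D"
    and tests: "\<And>h. continuous_on {-1..1} h \<Longrightarrow> (\<And>c. h c \<ge> 0) \<Longrightarrow>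
      0 \<le> (LINT x|lborel. D x * indicator {0..L} x * h (cos (pi * x / L)))"
    and x: "x \<in> {0..L}"
  shows "D x \<ge> 0"
proof -
  define N where "N x = max 0 (- D x)" for x
  define h where "h c = N (L / pi * arccos c)" for c
  have arccos_in: "L / pi * arccos c \<in> {0..L}" if "c \<in> {-1..1}" for c
    using that L arccos_lbound[of c] arccos_ubound[of c]
    by (auto simp: field_simps intro!: mult_left_le)
  have N: "continuous_on {0..L} N"
    unfolding N_def[abs_def] by (intro continuous_intros D)
  have "continuous_on {-1..1} h"
    unfolding h_def using arccos_in
    by (intro continuous_on_compose2[OF N] continuous_intros) auto
  moreover have "h c \<ge> 0" for c
    by (simp add: h_def N_def)
  ultimately have "0 \<le> (LINT x|lborel. D x * indicator {0..L} x * h (cos (pi * x / L)))"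
    by (rule tests)
  also have "\<dots> = (LINT x|lborel. - ((N x)^2 * indicator {0..L} x))"
  proof (rule Bochner_Integration.integral_cong[OF refl])
    fix x
    have "h (cos (pi * x / L)) = N x" if "x \<in> {0..L}"
      using that L by (simp add: h_def arccos_cos field_simps)
    then show "D x * indicator {0..L} x * h (cos (pi * x / L)) = - ((N x)^2 * indicator {0..L} x)"
      by (cases "x \<in> {0..L}") (auto simp: N_def max_def power2_eq_square)
  qed
  finally have "0 \<le> (LINT x|lborel. - ((N x)^2 * indicator {0..L} x))" .
  moreover have "0 \<le> (LINT x|lborel. (N x)^2 * indicator {0..L} x)"
    by (intro integral_nonneg_AE) auto
  ultimately have "(N x)^2 = 0"
    using continuous_nonneg_integral_eq_0D[of 0 L "\<lambda>x. (N x)^2"] N L x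
    by (auto intro!: continuous_intros)
  then show ?thesis
    by (simp add: N_def)
qed

lemma integral_heat_kernel_R_cos_test_le:
  fixes h :: "real \<Rightarrow> real"
  assumes L: "L > 0" and t: "t > 0" and h: "continuous_on {-1..1} h" and h_nonneg: "\<And>c. h c \<ge> 0"
  shows "(LINT x|lborel. heat_kernel_R t u x * indicator {0..L} x * h (cos (pi * x / L)))
      \<le> (LINT x|lborel. neumann_series L t u x * indicator {0..L} x * h (cos (pi * x / L)))"
proof -
  let ?\<phi> = "heat_kernel_R t 0"
  have \<Phi>: "integrable lborel (\<lambda>z. ?\<phi> z * h (cos (pi * (u + z) / L)))"
    by (intro integrable_mult_continuous_on_cos[OF h integrable_heat_kernel_R[OF t]]) measurable
  have \<Phi>_restricted: "integrable lborel (\<lambda>z. ?\<phi> z * h (cos (pi * (u + z) / L)) * indicator {0..L} (u + z))"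
  proof (rule Bochner_Integration.integrable_bound[OF \<Phi>])
    have "(\<lambda>z. indicator {0..L} (u + z) :: real) \<in> borel_measurable lborel"
      by measurable
    then show "(\<lambda>z. ?\<phi> z * h (cos (pi * (u + z) / L)) * indicator {0..L} (u + z)) \<in> borel_measurable lborel"
      using borel_measurable_integrable[OF \<Phi>] by (rule borel_measurable_times[rotated])
  qed (auto simp: indicator_def)
  have "(LINT x|lborel. heat_kernel_R t u x * indicator {0..L} x * h (cos (pi * x / L)))
      = (LINT z|lborel. ?\<phi> z * h (cos (pi * (u + z) / L)) * indicator {0..L} (u + z))"
    by (subst lborel_integral_real_affine[where c=1 and t=u])
      (simp_all add: heat_kernel_R_shift[of t u] mult_ac)
  also have "\<dots> \<le> (LINT z|lborel. ?\<phi> z * h (cos (pi * (u + z) / L)))"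
    using \<Phi> \<Phi>_restricted h_nonneg heat_kernel_R_nonneg t
    by (intro integral_mono) (auto simp: indicator_def)
  also have "\<dots> = (LINT x|lborel. neumann_series L t u x * indicator {0..L} x * h (cos (pi * x / L)))"
    by (rule integral_neumann_series_continuous_on_cos[OF L t h, symmetric])
  finally show ?thesis .
qed

lemma heat_kernel_R_le_neumann_series:
  assumes L: "L > 0" and t: "t > 0" and x: "x \<in> {0..L}"
  shows "heat_kernel_R t u x \<le> neumann_series L t u x"
proof -
  have G: "continuous_on UNIV (neumann_series L t u)"
    by (rule continuous_on_neumann_series[OF L t])
  have \<phi>: "continuous_on UNIV (heat_kernel_R t u)"
    using t unfolding heat_kernel_R_def by (intro continuous_intros) auto
  have "0 \<le> neumann_series L t u x - heat_kernel_R t u x"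
  proof (rule nonneg_if_cos_tests_nonneg[OF L _ _ x])
    show "continuous_on {0..L} (\<lambda>x. neumann_series L t u x - heat_kernel_R t u x)"
      using G \<phi> by (intro continuous_intros continuous_on_subset[OF G] continuous_on_subset[OF \<phi>]) auto
  next
    fix h :: "real \<Rightarrow> real"
    assume h: "continuous_on {-1..1} h" and h_nonneg: "\<And>c. h c \<ge> 0"
    have "continuous_on UNIV (\<lambda>x. h (cos (pi * x / L)))"
      by (rule continuous_on_compose2[OF h]) (use L in \<open>auto intro!: continuous_intros simp: cos_in_Icc\<close>)
    then have integrable: "integrable lborel (\<lambda>x. f x * indicator {0..L} x * h (cos (pi * x / L)))"
      if "continuous_on UNIV f" for f
      using borel_integrable_atLeastAtMost[of 0 L "\<lambda>x. f x * h (cos (pi * x / L))"] that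
      by (simp add: mult_ac continuous_on_eq_continuous_at continuous_intros)
    have "0 \<le> (LINT x|lborel. neumann_series L t u x * indicator {0..L} x * h (cos (pi * x / L)))
        - (LINT x|lborel. heat_kernel_R t u x * indicator {0..L} x * h (cos (pi * x / L)))"
      using integral_heat_kernel_R_cos_test_le[OF L t h h_nonneg] by simp
    also have "\<dots> = (LINT x|lborel. (neumann_series L t u x - heat_kernel_R t u x) * indicator {0..L} x * h (cos (pi * x / L)))"
      using integrable[OF G] integrable[OF \<phi>] by (simp add: left_diff_distrib)
    finally show "0 \<le> (LINT x|lborel. (neumann_series L t u x - heat_kernel_R t u x) * indicator {0..L} x * h (cos (pi * x / L)))" .
  qed
  then show ?thesis
    by simp
qed

section \<open>Exit times of Brownian motion\<close>

lemma Rats_dense_in_Icc: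
  fixes s t d :: real
  assumes "0 \<le> s" "s \<le> t" "0 < t" "0 < d"
  obtains q where "q \<in> \<rat>" "0 \<le> q" "q \<le> t" "\<bar>q - s\<bar> < d"
proof (cases "s < t")
  case True
  obtain q where "q \<in> \<rat>" "s < q" "q < min (s + d) t"
    using Rats_dense_in_real[of s "min (s + d) t"] True assms by auto
  then show ?thesis
    using assms that by auto
next
  case False
  obtain q where "q \<in> \<rat>" "max (t - d) 0 < q" "q < t"
    using Rats_dense_in_real[of "max (t - d) 0" t] assms by auto
  then show ?thesis
    using assms False that by auto
qed

text \<open>The rational times suffice by continuity; the converse direction takes a limit point of the
  rational witnesses in the compact interval \<open>[0, t]\<close>.\<close>

lemma exists_nonneg_iff_rational_approx:
  fixes g :: "real \<Rightarrow> real"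
  assumes g: "continuous_on {0..t} g" and t: "t > 0"
  shows "(\<exists>s\<in>{0..t}. 0 \<le> g s) \<longleftrightarrow> (\<forall>m. \<exists>q\<in>\<rat> \<inter> {0..t}. - inverse (real (Suc m)) < g q)"
proof
  assume "\<exists>s\<in>{0..t}. 0 \<le> g s"
  then obtain s where s: "s \<in> {0..t}" "0 \<le> g s"
    by auto
  show "\<forall>m. \<exists>q\<in>\<rat> \<inter> {0..t}. - inverse (real (Suc m)) < g q"
  proof
    fix m
    obtain d where d: "d > 0" and near: "\<And>s'. s' \<in> {0..t} \<Longrightarrow> dist s' s < d \<Longrightarrow>
        dist (g s') (g s) < inverse (real (Suc m))"
      using g s(1) unfolding continuous_on_iff
      by (metis inverse_positive_iff_positive of_nat_0_less_iff zero_less_Suc)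
    obtain q where q: "q \<in> \<rat>" "0 \<le> q" "q \<le> t" "\<bar>q - s\<bar> < d"
      using Rats_dense_in_Icc[of s t d] s t d by auto
    have "dist (g q) (g s) < inverse (real (Suc m))"
      using near[of q] q by (auto simp: dist_real_def)
    then have "- inverse (real (Suc m)) < g q"
      using s(2) by (auto simp: dist_real_def)
    then show "\<exists>q\<in>\<rat> \<inter> {0..t}. - inverse (real (Suc m)) < g q"
      using q by auto
  qed
next
  assume "\<forall>m. \<exists>q\<in>\<rat> \<inter> {0..t}. - inverse (real (Suc m)) < g q"
  then have "\<forall>m. \<exists>q. q \<in> {0..t} \<and> - inverse (real (Suc m)) < g q"
    by blast
  then obtain qq where qq_in: "\<And>m. qq m \<in> {0..t}" and qq: "\<And>m. - inverse (real (Suc m)) < g (qq m)"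
    by metis
  obtain l r where l: "l \<in> {0..t}" and r: "strict_mono r" and lim: "(qq \<circ> r) \<longlonglongrightarrow> l"
    using compact_imp_seq_compact[OF compact_Icc] qq_in by (metis seq_compactE)
  have "(\<lambda>n. g ((qq \<circ> r) n)) \<longlonglongrightarrow> g l"
    by (rule continuous_on_tendsto_compose[OF g lim l]) (use qq_in in auto)
  moreover have "- inverse (real (Suc n)) \<le> g ((qq \<circ> r) n)" for n
  proof -
    have "inverse (real (Suc (r n))) \<le> inverse (real (Suc n))"
      using seq_suble[OF r, of n] by (intro le_imp_inverse_le) auto
    then show ?thesis
      using qq[of "r n"] unfolding o_def by linarith
  qed
  moreover have "(\<lambda>n. - inverse (real (Suc n))) \<longlonglongrightarrow> 0"
    using tendsto_minus[OF LIMSEQ_inverse_real_of_nat] by simp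
  ultimately have "0 \<le> g l"
    by (intro LIMSEQ_le) auto
  then show "\<exists>s\<in>{0..t}. 0 \<le> g s"
    using l by auto
qed

lemma sets_exists_time_nonneg:
  fixes f :: "real \<Rightarrow> 'a \<Rightarrow> real"
  assumes meas: "\<And>s. f s \<in> borel_measurable M"
    and cont: "\<And>\<omega>. \<omega> \<in> space M \<Longrightarrow> continuous_on {0..t} (\<lambda>s. f s \<omega>)"
    and t: "t > 0"
  shows "{\<omega> \<in> space M. \<exists>s\<in>{0..t}. 0 \<le> f s \<omega>} \<in> sets M"
proof -
  have "{\<omega> \<in> space M. \<exists>s\<in>{0..t}. 0 \<le> f s \<omega>}
      = (\<Inter>m. \<Union>q\<in>\<rat> \<inter> {0..t}. {\<omega> \<in> space M. - inverse (real (Suc m)) < f q \<omega>})"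
    using exists_nonneg_iff_rational_approx[OF cont t] by auto
  moreover have "countable (\<rat> \<inter> {0..t})"
    by (rule countable_subset[OF _ countable_rat]) auto
  moreover have "{\<omega> \<in> space M. - inverse (real (Suc m)) < f q \<omega>} \<in> sets M" for m q
    using meas[of q] by measurable
  ultimately show ?thesis
    by (auto intro!: sets.countable_INT' sets.countable_UN')
qed

lemma exit_time_le_iff:
  fixes B :: "real \<Rightarrow> 'a \<Rightarrow> real"
  assumes I: "open I" and cont: "continuous_on {0..} (\<lambda>s. B s \<omega>)"
  shows "exit_time I B y \<omega> \<le> ereal t \<longleftrightarrow> (\<exists>s\<in>{0..t}. y + B (2 * s) \<omega> \<notin> I)"
proof
  assume "\<exists>s\<in>{0..t}. y + B (2 * s) \<omega> \<notin> I"
  then obtain s where s: "0 \<le> s" "s \<le> t" "y + B (2 * s) \<omega> \<notin> I"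
    by auto
  then have "exit_time I B y \<omega> \<le> ereal s"
    unfolding exit_time_def by (intro Inf_lower) auto
  then show "exit_time I B y \<omega> \<le> ereal t"
    using s by (simp add: order_trans)
next
  assume le: "exit_time I B y \<omega> \<le> ereal t"
  define S where "S = {s. 0 \<le> s \<and> y + B (2 * s) \<omega> \<notin> I}"
  have exit_time: "exit_time I B y \<omega> = Inf (ereal ` S)"
    unfolding exit_time_def S_def by (simp add: image_Collect)
  have "S \<noteq> {}"
    using le unfolding exit_time by (auto simp: top_ereal_def)
  text \<open>The exit set is closed since the path is continuous and \<open>I\<close> is open, so it contains its infimum.\<close>
  moreover have "closed S"
  proof -
    have "continuous_on {0..} (\<lambda>s. y + B (2 * s) \<omega>)"
      by (intro continuous_intros continuous_on_compose2[OF cont]) auto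
    then have "closed ({0..} \<inter> (\<lambda>s. y + B (2 * s) \<omega>) -` (- I))"
      using I by (intro continuous_closed_preimage) auto
    moreover have "S = {0..} \<inter> (\<lambda>s. y + B (2 * s) \<omega>) -` (- I)"
      unfolding S_def by auto
    ultimately show ?thesis
      by simp
  qed
  moreover have "bdd_below S"
    unfolding S_def by (intro bdd_belowI[of _ 0]) auto
  ultimately have inf: "Inf S \<in> S" "ereal (Inf S) = Inf (ereal ` S)"
    by (auto intro: closed_contains_Inf ereal_Inf')
  then have "ereal (Inf S) \<le> ereal t"
    using le unfolding exit_time by simp
  then have "Inf S \<le> t"
    by simp
  then show "\<exists>s\<in>{0..t}. y + B (2 * s) \<omega> \<notin> I"
    using inf(1) by (auto simp: S_def)
qed

lemma measure_brownian_endpoint: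
  fixes M :: "'a measure" and B :: "real \<Rightarrow> 'a \<Rightarrow> real"
  assumes BM: "std_brownian_motion M B" and t: "t > 0" and S: "S \<in> sets borel"
  shows "measure M {\<omega> \<in> space M. y + B (2 * t) \<omega> \<in> S} = (LINT \<eta>|lborel. indicator S \<eta> * heat_kernel_R t y \<eta>)"
proof -
  have B0: "\<And>\<omega>. \<omega> \<in> space M \<Longrightarrow> B 0 \<omega> = 0"
    using BM unfolding std_brownian_motion_def by auto
  have "\<forall>s t. 0 \<le> s \<and> s < t \<longrightarrow>
      distributed M lborel (\<lambda>\<omega>. B t \<omega> - B s \<omega>) (normal_density 0 (sqrt (t - s)))"
    using BM unfolding std_brownian_motion_def by blast
  then have increment: "distributed M lborel (\<lambda>\<omega>. B (2 * t) \<omega> - B 0 \<omega>) (normal_density 0 (sqrt (2 * t)))"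
    using t by (metis diff_zero mult_pos_pos zero_less_numeral order_refl)
  define A where "A = {z::real. y + z \<in> S}"
  have A: "A \<in> sets lborel"
    using S unfolding A_def by measurable
  have nd: "integrable lborel (\<lambda>z. indicator A z * normal_density 0 (sqrt (2 * t)) z)"
    using integrable_real_mult_indicator[OF A integrable_normal_density, of "sqrt (2 * t)" 0] t
    by (simp add: mult.commute)
  have "{\<omega> \<in> space M. y + B (2 * t) \<omega> \<in> S} = (\<lambda>\<omega>. B (2 * t) \<omega> - B 0 \<omega>) -` A \<inter> space M"
    unfolding A_def using B0 by auto
  then have "emeasure M {\<omega> \<in> space M. y + B (2 * t) \<omega> \<in> S}
      = (\<integral>\<^sup>+ z. ennreal (indicator A z * normal_density 0 (sqrt (2 * t)) z) \<partial>lborel)"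
    using distributed_emeasure[OF increment A]
    by (simp add: indicator_mult_ennreal mult.commute)
  also have "\<dots> = ennreal (LINT z|lborel. indicator A z * normal_density 0 (sqrt (2 * t)) z)"
    using nd by (rule nn_integral_eq_integral) (auto simp: normal_density_nonneg)
  also have "(LINT z|lborel. indicator A z * normal_density 0 (sqrt (2 * t)) z)
      = (LINT \<eta>|lborel. indicator S \<eta> * heat_kernel_R t y \<eta>)"
    using lborel_integral_real_affine[where c=1 and t="-y" and f="\<lambda>z. indicator A z * normal_density 0 (sqrt (2 * t)) z"]
    by (simp add: A_def indicator_def heat_kernel_R_eq_normal_density[OF t] normal_density_def power2_commute)
  moreover have "0 \<le> (LINT \<eta>|lborel. indicator S \<eta> * heat_kernel_R t y \<eta>)"
    using t by (intro integral_nonneg_AE AE_I2) (simp add: heat_kernel_R_nonneg)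
  ultimately show ?thesis
    by (simp add: measure_def)
qed

lemma sets_exit_time_le:
  fixes M :: "'a measure" and B :: "real \<Rightarrow> 'a \<Rightarrow> real"
  assumes BM: "std_brownian_motion M B" and t: "t > 0" and ab: "a < b"
  shows "{\<omega> \<in> space M. exit_time {a<..<b} B y \<omega> \<le> ereal t} \<in> sets M"
proof -
  have meas: "\<And>s. B s \<in> borel_measurable M"
    and cont: "\<And>\<omega>. \<omega> \<in> space M \<Longrightarrow> continuous_on {0..} (\<lambda>s. B s \<omega>)"
    using BM unfolding std_brownian_motion_def by auto
  have outside: "w \<notin> {a<..<b} \<longleftrightarrow> 0 \<le> (w - a) * (w - b)" for w
    using ab by (auto simp: zero_le_mult_iff)
  have "exit_time {a<..<b} B y \<omega> \<le> ereal t
      \<longleftrightarrow> (\<exists>s\<in>{0..t}. 0 \<le> (y + B (2 * s) \<omega> - a) * (y + B (2 * s) \<omega> - b))" if "\<omega> \<in> space M" for \<omega>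
    unfolding exit_time_le_iff[of "{a<..<b}" B, OF open_greaterThanLessThan cont[OF that]] outside ..
  then have "{\<omega> \<in> space M. exit_time {a<..<b} B y \<omega> \<le> ereal t}
      = {\<omega> \<in> space M. \<exists>s\<in>{0..t}. 0 \<le> (y + B (2 * s) \<omega> - a) * (y + B (2 * s) \<omega> - b)}"
    by auto
  moreover have "continuous_on {0..t} (\<lambda>s. B (2 * s) \<omega>)" if "\<omega> \<in> space M" for \<omega>
    by (rule continuous_on_compose2[OF cont[OF that]]) (auto intro!: continuous_intros)
  ultimately show ?thesis
    using meas t by (simp only:) (intro sets_exists_time_nonneg, auto intro!: continuous_intros)
qed

lemma integral_outside_heat_kernel_R_le_exit_probability:
  fixes M :: "'a measure" and B :: "real \<Rightarrow> 'a \<Rightarrow> real"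
  assumes BM: "std_brownian_motion M B" and t: "t > 0" and ab: "a < b"
  shows "(LINT \<eta>|lborel. indicator (- {a<..<b}) \<eta> * heat_kernel_R t y \<eta>)
           \<le> measure M {\<omega> \<in> space M. exit_time {a<..<b} B y \<omega> \<le> ereal t}"
proof -
  have "prob_space M"
    and cont: "\<And>\<omega>. \<omega> \<in> space M \<Longrightarrow> continuous_on {0..} (\<lambda>s. B s \<omega>)"
    using BM unfolding std_brownian_motion_def by auto
  then interpret prob_space M
    by simp
  have "{\<omega> \<in> space M. y + B (2 * t) \<omega> \<in> - {a<..<b}} \<subseteq> {\<omega> \<in> space M. exit_time {a<..<b} B y \<omega> \<le> ereal t}"
  proof
    fix \<omega>
    assume "\<omega> \<in> {\<omega> \<in> space M. y + B (2 * t) \<omega> \<in> - {a<..<b}}"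
    then have "\<omega> \<in> space M" "\<exists>s\<in>{0..t}. y + B (2 * s) \<omega> \<notin> {a<..<b}"
      using t by (auto intro!: bexI[of _ t])
    then show "\<omega> \<in> {\<omega> \<in> space M. exit_time {a<..<b} B y \<omega> \<le> ereal t}"
      using exit_time_le_iff[of "{a<..<b}" B \<omega> y t] cont by simp
  qed
  then have "measure M {\<omega> \<in> space M. y + B (2 * t) \<omega> \<in> - {a<..<b}}
      \<le> measure M {\<omega> \<in> space M. exit_time {a<..<b} B y \<omega> \<le> ereal t}"
    using sets_exit_time_le[OF BM t ab] by (rule finite_measure_mono)
  moreover have "- {a<..<b} \<in> sets borel"
    by simp
  ultimately show ?thesis
    by (simp only: measure_brownian_endpoint[OF BM t])
qed

lemma neumann_kernel_eq_neumann_series: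
  assumes "y \<in> {a<..<a+L}"
  shows "neumann_kernel a L t y \<eta> = indicator {a<..<a+L} \<eta> * neumann_series L t (y - a) (\<eta> - a)"
proof (cases "\<eta> \<in> {a<..<a+L}")
  case True
  then show ?thesis
    using assms by (simp add: neumann_kernel_def neumann_series_def neumann_term_def neumann_weight_def)
next
  case False
  then have outside: "\<not> (y \<in> {a<..<a+L} \<and> \<eta> \<in> {a<..<a+L})"
    by blast
  show ?thesis
    unfolding neumann_kernel_def if_not_P[OF outside] using False by simp
qed

lemma integrable_neumann_kernel:
  assumes L: "L > 0" and t: "t > 0" and y: "y \<in> {a<..<a+L}"
  shows "integrable lborel (neumann_kernel a L t y)"
    and "(LINT \<eta>|lborel. neumann_kernel a L t y \<eta>) = 1"
proof -
  let ?G = "\<lambda>x. neumann_series L t (y - a) x * indicator {0..L} x"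
  let ?G' = "\<lambda>x. neumann_series L t (y - a) x * indicator {0<..<L} x"
  have G: "integrable lborel ?G"
    using integrable_neumann_series[OF L t, of "\<lambda>_. 1"] by simp
  have [measurable]: "neumann_series L t (y - a) \<in> borel_measurable borel"
    by (rule borel_measurable_continuous_onI[OF continuous_on_neumann_series[OF L t]])
  have "AE x in lborel. ?G' x = ?G x"
    using AE_lborel_singleton[of 0] AE_lborel_singleton[of L]
    by eventually_elim (auto simp: indicator_def)
  then have G': "integrable lborel ?G'" "(LINT x|lborel. ?G' x) = 1"
    using integrable_cong_AE[of ?G' lborel ?G] integral_cong_AE[of ?G' lborel ?G] G
      integral_neumann_series[OF L t]
    by auto
  have shift: "neumann_kernel a L t y \<eta> = ?G' (-a + 1 * \<eta>)" for \<eta>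
    using y by (auto simp: neumann_kernel_eq_neumann_series indicator_def)
  show "integrable lborel (neumann_kernel a L t y)"
    unfolding shift using lborel_integrable_real_affine[OF G'(1), of 1 "-a"] by simp
  show "(LINT \<eta>|lborel. neumann_kernel a L t y \<eta>) = 1"
    unfolding shift using lborel_integral_real_affine[of 1 ?G' "-a"] G'(2) by simp
qed

lemma heat_kernel_R_le_neumann_kernel:
  assumes L: "L > 0" and t: "t > 0" and y: "y \<in> {a<..<a+L}" and \<eta>: "\<eta> \<in> {a<..<a+L}"
  shows "heat_kernel_R t y \<eta> \<le> neumann_kernel a L t y \<eta>"
proof -
  have "heat_kernel_R t (y - a) (\<eta> - a) \<le> neumann_series L t (y - a) (\<eta> - a)"
    using \<eta> by (intro heat_kernel_R_le_neumann_series[OF L t]) auto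
  then show ?thesis
    using \<eta> y by (simp add: neumann_kernel_eq_neumann_series heat_kernel_R_shift[of t y]
        heat_kernel_R_shift[of t "y - a"])
qed

lemma abs_heat_kernel_R_minus_neumann_kernel_le:
  assumes L: "L > 0" and t: "t > 0" and y: "y \<in> {a<..<a+L}"
  shows "\<bar>heat_kernel_R t y \<eta> - neumann_kernel a L t y \<eta>\<bar> \<le> 1 / L + 1 / sqrt t"
proof -
  have "heat_kernel_R t y \<eta> \<le> 1 / L + 1 / sqrt t"
    using heat_kernel_R_le[OF t, of y \<eta>] L by (smt (verit) divide_pos_pos)
  moreover have "neumann_kernel a L t y \<eta> \<le> 1 / L + 1 / sqrt t"
    using abs_neumann_series_le[OF L t, of "y - a" "\<eta> - a"] y
    by (auto simp: neumann_kernel_eq_neumann_series indicator_def)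
  moreover have "0 \<le> neumann_kernel a L t y \<eta>"
    using heat_kernel_R_le_neumann_kernel[OF L t y, of \<eta>] heat_kernel_R_nonneg[of t y \<eta>] t y
    by (cases "\<eta> \<in> {a<..<a+L}") (auto simp: neumann_kernel_eq_neumann_series)
  ultimately show ?thesis
    using heat_kernel_R_nonneg[of t y \<eta>] t by linarith
qed

text \<open>The excess of \<open>G\<close> over \<open>\<phi>\<close> on \<open>I\<close> equals the mass of \<open>\<phi>\<close> off \<open>I\<close>, as both have
  the same total mass.\<close>

lemma integral_abs_diff_eq_twice_outside:
  fixes \<phi> G :: "real \<Rightarrow> real"
  assumes \<phi>: "integrable lborel \<phi>" "\<And>x. 0 \<le> \<phi> x" and G: "integrable lborel G"
    and mass: "(LINT x|lborel. G x) = (LINT x|lborel. \<phi> x)" and I: "I \<in> sets borel"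
    and outside: "\<And>x. x \<notin> I \<Longrightarrow> G x = 0" and inside: "\<And>x. x \<in> I \<Longrightarrow> \<phi> x \<le> G x"
  shows "integrable lborel (\<lambda>x. \<bar>\<phi> x - G x\<bar>)"
    and "(LINT x|lborel. \<bar>\<phi> x - G x\<bar>) = 2 * (LINT x|lborel. indicator (- I) x * \<phi> x)"
proof -
  have split: "\<bar>\<phi> x - G x\<bar> = indicator (- I) x * \<phi> x + (G x - indicator I x * \<phi> x)" for x
    using inside[of x] outside[of x] \<phi>(2)[of x] by (cases "x \<in> I") auto
  have out: "integrable lborel (\<lambda>x. indicator (- I) x * \<phi> x)"
    and ins: "integrable lborel (\<lambda>x. indicator I x * \<phi> x)"
    using integrable_mult_indicator[of "- I" lborel \<phi>] integrable_mult_indicator[of I lborel \<phi>] I \<phi>(1)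
    by auto
  have "(LINT x|lborel. indicator I x * \<phi> x) + (LINT x|lborel. indicator (- I) x * \<phi> x)
      = (LINT x|lborel. indicator I x * \<phi> x + indicator (- I) x * \<phi> x)"
    by (rule Bochner_Integration.integral_add[OF ins out, symmetric])
  also have "\<dots> = (LINT x|lborel. \<phi> x)"
    by (rule Bochner_Integration.integral_cong) (auto simp: indicator_def)
  finally show "integrable lborel (\<lambda>x. \<bar>\<phi> x - G x\<bar>)"
    and "(LINT x|lborel. \<bar>\<phi> x - G x\<bar>) = 2 * (LINT x|lborel. indicator (- I) x * \<phi> x)"
    unfolding split using out ins G mass by simp_all
qed

lemma nn_integral_square_le:
  fixes f :: "'a \<Rightarrow> real"
  assumes f: "f \<in> borel_measurable M" and bound: "\<And>x. \<bar>f x\<bar> \<le> K"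
  shows "(\<integral>\<^sup>+ x. ennreal ((f x)^2) \<partial>M) \<le> ennreal K * (\<integral>\<^sup>+ x. ennreal \<bar>f x\<bar> \<partial>M)"
proof -
  have K: "K \<ge> 0"
    using bound[of undefined] by linarith
  have "(\<integral>\<^sup>+ x. ennreal ((f x)^2) \<partial>M) \<le> (\<integral>\<^sup>+ x. ennreal K * ennreal \<bar>f x\<bar> \<partial>M)"
  proof (rule nn_integral_mono)
    fix x
    have "(f x)^2 \<le> K * \<bar>f x\<bar>"
      using mult_right_mono[OF bound[of x] abs_ge_zero[of "f x"]] by (simp add: power2_eq_square abs_mult_self_eq)
    then show "ennreal ((f x)^2) \<le> ennreal K * ennreal \<bar>f x\<bar>"
      using K by (simp add: ennreal_mult[symmetric] ennreal_leI)
  qed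
  also have "\<dots> = ennreal K * (\<integral>\<^sup>+ x. ennreal \<bar>f x\<bar> \<partial>M)"
    using f by (intro nn_integral_cmult) auto
  finally show ?thesis .
qed

lemma nn_integral_abs_heat_kernel_R_minus_neumann_kernel_le:
  fixes M :: "'a measure" and B :: "real \<Rightarrow> 'a \<Rightarrow> real"
  assumes L: "L > 0" and t: "t > 0" and y: "y \<in> {a<..<a+L}" and BM: "std_brownian_motion M B"
  shows "(\<integral>\<^sup>+ \<eta>. ennreal \<bar>heat_kernel_R t y \<eta> - neumann_kernel a L t y \<eta>\<bar> \<partial>lborel)
      \<le> ennreal (2 * measure M {\<omega> \<in> space M. exit_time {a<..<a+L} B y \<omega> \<le> ereal t})"
proof -
  note G = integrable_neumann_kernel[OF L t y]
  note \<phi> = integrable_heat_kernel_R[OF t, of y] integral_heat_kernel_R[OF t, of y]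
  have mass: "(LINT \<eta>|lborel. neumann_kernel a L t y \<eta>) = (LINT \<eta>|lborel. heat_kernel_R t y \<eta>)"
    using G(2) \<phi>(2) by simp
  have outside: "neumann_kernel a L t y \<eta> = 0" if "\<eta> \<notin> {a<..<a+L}" for \<eta>
    using y that by (simp add: neumann_kernel_eq_neumann_series)
  have nonneg: "0 \<le> heat_kernel_R t y \<eta>" for \<eta>
    using t by (simp add: heat_kernel_R_nonneg)
  have borel: "{a<..<a+L} \<in> sets borel"
    by simp
  note L1 = integral_abs_diff_eq_twice_outside[OF \<phi>(1) nonneg G(1) mass borel outside
      heat_kernel_R_le_neumann_kernel[OF L t y]]
  have integrable: "integrable lborel (\<lambda>\<eta>. \<bar>heat_kernel_R t y \<eta> - neumann_kernel a L t y \<eta>\<bar>)"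
    using L1(1) by simp
  have "(LINT \<eta>|lborel. \<bar>heat_kernel_R t y \<eta> - neumann_kernel a L t y \<eta>\<bar>)
      = 2 * (LINT \<eta>|lborel. indicator (- {a<..<a+L}) \<eta> * heat_kernel_R t y \<eta>)"
    using L1(2) by simp
  also have "\<dots> \<le> 2 * measure M {\<omega> \<in> space M. exit_time {a<..<a+L} B y \<omega> \<le> ereal t}"
    using integral_outside_heat_kernel_R_le_exit_probability[OF BM t, of a "a + L" y] L by simp
  finally show ?thesis
    using integrable by (simp add: nn_integral_eq_integral ennreal_leI)
qed

lemma nn_integral_square_heat_kernel_R_minus_neumann_kernel_le:
  fixes M :: "'a measure" and B :: "real \<Rightarrow> 'a \<Rightarrow> real"
  assumes L: "L > 0" and t: "t > 0" and y: "y \<in> {a<..<a+L}" and BM: "std_brownian_motion M B"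
  shows "(\<integral>\<^sup>+ \<eta>. ennreal ((heat_kernel_R t y \<eta> - neumann_kernel a L t y \<eta>)^2) \<partial>lborel)
      \<le> ennreal ((1 / L + 1 / sqrt t) * (2 * measure M {\<omega> \<in> space M. exit_time {a<..<a+L} B y \<omega> \<le> ereal t}))"
proof -
  define d where "d \<eta> = heat_kernel_R t y \<eta> - neumann_kernel a L t y \<eta>" for \<eta>
  have "integrable lborel d"
    unfolding d_def using integrable_heat_kernel_R[OF t] integrable_neumann_kernel(1)[OF L t y]
    by (rule Bochner_Integration.integrable_diff)
  then have "(\<integral>\<^sup>+ \<eta>. ennreal ((d \<eta>)^2) \<partial>lborel) \<le> ennreal (1 / L + 1 / sqrt t) * (\<integral>\<^sup>+ \<eta>. ennreal \<bar>d \<eta>\<bar> \<partial>lborel)"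
    unfolding d_def
    by (intro nn_integral_square_le borel_measurable_integrable abs_heat_kernel_R_minus_neumann_kernel_le[OF L t y])
  also have "\<dots> \<le> ennreal (1 / L + 1 / sqrt t) * ennreal (2 * measure M {\<omega> \<in> space M. exit_time {a<..<a+L} B y \<omega> \<le> ereal t})"
    unfolding d_def by (intro mult_left_mono nn_integral_abs_heat_kernel_R_minus_neumann_kernel_le[OF L t y BM]) simp
  finally show ?thesis
    using L t by (simp add: d_def ennreal_mult)
qed

theorem mainTheorem15:
  fixes T :: real
  assumes "T > 0"
  shows "\<exists>C>0. \<forall>(alpha::real) (lam::real) (t::real) (y::real) (M::'a measure) B.
     alpha < 0 \<and> 0 < alpha + 1 \<and> 1 \<le> lam \<and> 0 < t \<and> t \<le> T \<and>
     y \<in> scaled_interval alpha lam \<and> std_brownian_motion M B \<longrightarrow>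
     (let I = scaled_interval alpha lam;
          G = neumann_kernel (lam * alpha) lam t y;
          p = measure M {\<omega> \<in> space M. exit_time I B y \<omega> \<le> ereal t} in
      (\<integral>\<^sup>+ \<eta>. ennreal \<bar>heat_kernel_R t y \<eta> - G \<eta>\<bar> \<partial>lborel) \<le> ennreal (2 * p) \<and>
      (\<integral>\<^sup>+ \<eta>. ennreal ((heat_kernel_R t y \<eta> - G \<eta>)^2) \<partial>lborel)
         \<le> ennreal (C * t powr (-1/2) * p))"
proof (intro exI[of _ "2 * (sqrt T + 1)"] conjI allI impI)
  fix alpha lam t y :: real and M :: "'a measure" and B
  assume "alpha < 0 \<and> 0 < alpha + 1 \<and> 1 \<le> lam \<and> 0 < t \<and> t \<le> T \<and>
     y \<in> scaled_interval alpha lam \<and> std_brownian_motion M B"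
  then have lam: "1 \<le> lam" and t: "0 < t" "t \<le> T" and BM: "std_brownian_motion M B"
    and y: "y \<in> {lam * alpha<..<lam * alpha + lam}" and I: "scaled_interval alpha lam = {lam * alpha<..<lam * alpha + lam}"
    by (auto simp: scaled_interval_def)
  define p where "p = measure M {\<omega> \<in> space M. exit_time (scaled_interval alpha lam) B y \<omega> \<le> ereal t}"
  have K: "1 / lam + 1 / sqrt t \<le> (sqrt T + 1) * t powr (-1/2)"
  proof -
    have "1 / lam \<le> 1" "1 \<le> sqrt T / sqrt t"
      using lam t real_sqrt_le_mono[OF t(2)] by simp_all
    moreover have "(sqrt T + 1) * t powr (-1/2) = sqrt T / sqrt t + 1 / sqrt t"
      using t by (simp add: powr_minus_divide powr_half_sqrt add_divide_distrib)
    ultimately show ?thesis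
      by linarith
  qed
  have "(1 / lam + 1 / sqrt t) * (2 * p) \<le> (sqrt T + 1) * t powr (-1/2) * (2 * p)"
    by (rule mult_right_mono[OF K]) (simp add: p_def)
  then have "(1 / lam + 1 / sqrt t) * (2 * p) \<le> 2 * (sqrt T + 1) * t powr (-1/2) * p"
    by (simp only: mult_ac)
  then show "let I = scaled_interval alpha lam; G = neumann_kernel (lam * alpha) lam t y;
          p = measure M {\<omega> \<in> space M. exit_time I B y \<omega> \<le> ereal t} in
      (\<integral>\<^sup>+ \<eta>. ennreal \<bar>heat_kernel_R t y \<eta> - G \<eta>\<bar> \<partial>lborel) \<le> ennreal (2 * p) \<and>
      (\<integral>\<^sup>+ \<eta>. ennreal ((heat_kernel_R t y \<eta> - G \<eta>)^2) \<partial>lborel)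
         \<le> ennreal (2 * (sqrt T + 1) * t powr (-1/2) * p)"
    using nn_integral_abs_heat_kernel_R_minus_neumann_kernel_le[OF _ t(1) y BM]
      nn_integral_square_heat_kernel_R_minus_neumann_kernel_le[OF _ t(1) y BM] lam
    unfolding Let_def I p_def by (auto intro: order_trans ennreal_leI)
qed (use assms in \<open>simp add: add_pos_nonneg\<close>)

end
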